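(* Let $\beta\in\mathbb{C}$ with $|\beta|=1$ and $\beta^n\neq1$ for all $n\in\mathbb{N}$, and let $m\in\mathrm{Hol}(\mathbb{D})$ with $m(z)\neq0$ for all $z\in\mathbb{D}$. Let $T:\mathrm{Hol}(\mathbb{D})\to\mathrm{Hol}(\mathbb{D})$ be given by $(Tf)(z)=m(z)f(\beta z)$. Then (a) $\{\beta^n m(0):n\in\mathbb{N}_0\}\subset\sigma(T)\subset\{\lambda\in\mathbb{C}:|\lambda|=|m(0)|\}$; (b) $\sigma_W(T)=\{\lambda\in\mathbb{C}:|\lambda|=|m(0)|\}$.
   Context: $\mathbb{D}$ is the open unit disc, $\mathbb{N}_0=\mathbb{N}\cup\{0\}$, and $\mathrm{Hol}(\mathbb{D})$ is the Fréchet space of holomorphic functions on $\mathbb{D}$ with the topology of uniform convergence on compact subsets, given by the seminorms $\|f\|_{A(r\mathbb{D})}=\sup_{|z|\leq r}|f(z)|$, $0<r<1$. For a continuous linear operator $T$ on $\mathrm{Hol}(\mathbb{D})$, $\rho(T)$ is the set of $\lambda\in\mathbb{C}$ with $\lambda\mathrm{Id}-T$ bijective, $\sigma(T)=\mathbb{C}\setminus\rho(T)$, and $R_\lambda=(\lambda\mathrm{Id}-T)^{-1}$. The Waelbroeck resolvent set $\rho_W(T)$ is the set of $\lambda\in\rho(T)$ for which there is $\delta>0$ with $\overline{D}(\lambda,\delta)\subset\rho(T)$ and $\sup_{|\mu-\lambda|\leq\delta}\|R_\mu f\|_{A(r\mathbb{D})}<\infty$ for all $f\in\mathrm{Hol}(\mathbb{D})$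 and all $0<r<1$; $\sigma_W(T)=\mathbb{C}\setminus\rho_W(T)$. *)

theory Defs
  imports "HOL-Analysis.Analysis"
begin

text \<open>Hol(D) is modelled as the set of functions complex => complex that are holomorphic
on the open unit disc; two such functions are identified when they agree on the disc.
An operator on Hol(D) is a map T on functions (assumed to preserve HolD).\<close>

definition HolD :: "(complex \<Rightarrow> complex) set" where
  "HolD = {f. f holomorphic_on ball 0 1}"

definition solves :: "((complex \<Rightarrow> complex) \<Rightarrow> (complex \<Rightarrow> complex)) \<Rightarrow> complex
    \<Rightarrow> (complex \<Rightarrow> complex) \<Rightarrow> (complex \<Rightarrow> complex) \<Rightarrow> bool" where
  "solves T \<mu> g f \<longleftrightarrow> (\<forall>z\<in>ball 0 1. \<mu> * f z - T f z = g z)"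

definition hol_resolvent_set :: "((complex \<Rightarrow> complex) \<Rightarrow> (complex \<Rightarrow> complex)) \<Rightarrow> complex set" where
  "hol_resolvent_set T = {l.
     (\<forall>g\<in>HolD. \<exists>f\<in>HolD. solves T l g f) \<and>
     (\<forall>f1\<in>HolD. \<forall>f2\<in>HolD.
        (\<forall>z\<in>ball 0 1. l * f1 z - T f1 z = l * f2 z - T f2 z) \<longrightarrow>
        (\<forall>z\<in>ball 0 1. f1 z = f2 z))}"

definition hol_spectrum :: "((complex \<Rightarrow> complex) \<Rightarrow> (complex \<Rightarrow> complex)) \<Rightarrow> complex set" where
  "hol_spectrum T = - hol_resolvent_set T"

text \<open>R_mu g is the unique f in HolD with solves T mu g f,
so the boundedness of sup over mu of the seminorm of R_mu g is expressed by a uniform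
bound C on all such solutions on the closed disc of radius r.\<close>
definition waelbroeck_resolvent_set :: "((complex \<Rightarrow> complex) \<Rightarrow> (complex \<Rightarrow> complex)) \<Rightarrow> complex set" where
  "waelbroeck_resolvent_set T = {l. l \<in> hol_resolvent_set T \<and>
     (\<exists>\<delta>>0. cball l \<delta> \<subseteq> hol_resolvent_set T \<and>
        (\<forall>g\<in>HolD. \<forall>r. 0 < r \<and> r < 1 \<longrightarrow>
           (\<exists>C. \<forall>\<mu>\<in>cball l \<delta>. \<forall>f\<in>HolD. solves T \<mu> g f \<longrightarrow>
                 (\<forall>z. norm z \<le> r \<longrightarrow> norm (f z) \<le> C))))}"

definition waelbroeck_spectrum :: "((complex \<Rightarrow> complex) \<Rightarrow> (complex \<Rightarrow> complex)) \<Rightarrow> complex set" where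
  "waelbroeck_spectrum T = - waelbroeck_resolvent_set T"

end

theory Submission
  imports Defs "HOL-Complex_Analysis.Complex_Analysis"
begin

text \<open>
  The powers of \<open>T\<close> are \<open>T\<^sup>k f = m\<^sub>k \<cdot> f(\<beta>\<^sup>k \<cdot>)\<close> with the cocycle
  \<open>m\<^sub>k(z) = m(z) m(\<beta>z) \<dots> m(\<beta>\<^sup>k\<^sup>-\<^sup>1 z)\<close>. Writing \<open>m = exp h\<close>, \<open>log |m\<^sub>k|\<close> is a Birkhoff sum of
  \<open>Re h\<close> along the irrational rotation, and on compact subdiscs these sums are \<open>k log |m(0)| + o(k)\<close>
  uniformly. Hence for \<open>|\<lambda>| > |m(0)|\<close> the Neumann series \<open>\<Sum> T\<^sup>k g / \<lambda>\<^sup>k\<^sup>+\<^sup>1\<close> converges locally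
  uniformly, with bounds uniform for \<open>\<lambda>\<close> in a disc; for \<open>|\<lambda>| < |m(0)|\<close> the same argument applies
  after the substitution \<open>z = \<beta>\<^sup>-\<^sup>1 w\<close>, which turns the cocycle of \<open>m\<close> into that of \<open>\<lambda>/m\<close>.
  So the Waelbroeck spectrum lies on the circle \<open>|\<lambda>| = |m(0)|\<close>. On the other hand \<open>z\<^sup>n\<close> is not in
  the range of \<open>\<beta>\<^sup>n m(0) - T\<close>: a solution would vanish at \<open>0\<close> to increasing order. The points
  \<open>\<beta>\<^sup>n m(0)\<close> are dense in the circle, which is therefore contained in the closure of the
  spectrum, hence in the Waelbroeck spectrum.
\<close>

lemma norm_power_mult_unimodular: "norm (\<gamma>::complex) = 1 \<Longrightarrow> norm (\<gamma> ^ k * z) = norm z"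
  by (simp add: norm_mult norm_power)

lemma holomorphic_on_rotate:
  assumes "f holomorphic_on ball 0 1" "norm (\<gamma>::complex) = 1"
  shows "(\<lambda>z. f (\<gamma> * z)) holomorphic_on ball 0 1"
proof -
  have "(f \<circ> (\<lambda>z. \<gamma> * z)) holomorphic_on ball 0 1"
    by (rule holomorphic_on_compose_gen[where t = "ball 0 1"])
       (use assms in \<open>auto intro!: holomorphic_intros simp: norm_mult\<close>)
  then show ?thesis by (simp add: o_def)
qed

lemma holomorphic_bounded_on_cball:
  assumes "f holomorphic_on ball 0 1" "r < 1"
  obtains G where "\<forall>w. norm w \<le> r \<longrightarrow> norm (f w) \<le> G"
proof -
  have "f holomorphic_on cball 0 r"
    using assms by (auto intro: holomorphic_on_subset)
  then obtain G where "\<And>w. w \<in> cball 0 r \<Longrightarrow> norm (f w) \<le> G"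
    by (metis compact_cball continuous_on_compact_bound holomorphic_on_imp_continuous_on)
  then show ?thesis using that by auto
qed

lemma unit_disc_cball_neighbourhood:
  assumes "x \<in> ball (0::complex) 1"
  obtains r d where "0 < r" "r < 1" "0 < d" "cball x d \<subseteq> cball 0 r"
proof (rule that[of "(1 + norm x) / 2" "(1 - norm x) / 2"])
  show "0 < (1 + norm x) / 2" "0 < (1 - norm x) / 2" "(1 + norm x) / 2 < 1"
    using assms by (simp_all add: add_pos_nonneg field_simps)
  show "cball x ((1 - norm x) / 2) \<subseteq> cball 0 ((1 + norm x) / 2)"
    by (simp add: cball_subset_cball_iff field_simps)
qed

definition weighted_rotation ::
    "(complex \<Rightarrow> complex) \<Rightarrow> complex \<Rightarrow> (complex \<Rightarrow> complex) \<Rightarrow> complex \<Rightarrow> complex" where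
  "weighted_rotation a \<gamma> f z = a z * f (\<gamma> * z)"

lemma solves_weighted_rotation:
  "solves (weighted_rotation a \<gamma>) l g f \<longleftrightarrow> (\<forall>z\<in>ball 0 1. l * f z - a z * f (\<gamma> * z) = g z)"
  by (simp add: solves_def weighted_rotation_def)

definition cocycle :: "(complex \<Rightarrow> complex) \<Rightarrow> complex \<Rightarrow> nat \<Rightarrow> complex \<Rightarrow> complex" where
  "cocycle a \<gamma> k z = (\<Prod>j<k. a (\<gamma> ^ j * z))"

lemma cocycle_0 [simp]: "cocycle a \<gamma> 0 z = 1"
  by (simp add: cocycle_def)

lemma cocycle_Suc: "cocycle a \<gamma> (Suc k) z = cocycle a \<gamma> k z * a (\<gamma> ^ k * z)"
  by (simp add: cocycle_def)

lemma cocycle_Suc_left: "cocycle a \<gamma> (Suc k) z = a z * cocycle a \<gamma> k (\<gamma> * z)"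
  unfolding cocycle_def by (subst prod.lessThan_Suc_shift) (simp add: mult_ac)

lemma cocycle_scale: "cocycle (\<lambda>z. c * a z) \<gamma> k z = c ^ k * cocycle a \<gamma> k z"
  by (simp add: cocycle_def prod.distrib)

lemma holomorphic_cocycle:
  assumes "a holomorphic_on ball 0 1" "norm \<gamma> = 1"
  shows "cocycle a \<gamma> k holomorphic_on ball 0 1"
proof -
  have "(\<lambda>z. a (\<gamma> ^ j * z)) holomorphic_on ball 0 1" for j
    using holomorphic_on_rotate[OF assms(1), of "\<gamma> ^ j"] assms(2) by (simp add: norm_power)
  then show ?thesis
    unfolding cocycle_def[abs_def] by (intro holomorphic_intros)
qed

lemma holomorphic_polynomial_approximation:
  fixes h :: "complex \<Rightarrow> complex"
  assumes "h holomorphic_on ball 0 1" "0 \<le> r" "r < 1" "e > 0"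
  obtains c N where "c 0 = h 0" "\<forall>w. norm w \<le> r \<longrightarrow> norm (h w - (\<Sum>n<Suc N. c n * w ^ n)) \<le> e"
proof -
  define c where "c n = (deriv ^^ n) h 0 / fact n" for n
  have sums: "(\<lambda>n. c n * w ^ n) sums h w" if "w \<in> ball 0 1" for w
    using holomorphic_power_series[OF assms(1) that] by (simp add: c_def)
  define s where "s = (r + 1) / 2"
  have "summable (\<lambda>n. c n * of_real s ^ n)"
    using sums[of "of_real s"] assms by (auto simp: s_def sums_iff)
  then have "ereal s \<le> conv_radius c"
    using conv_radius_geI assms by (force simp: s_def)
  moreover have "ereal r < ereal s" using assms by (simp add: s_def)
  ultimately have "ereal r < conv_radius c"
    by (meson less_le_trans)
  from uniform_limitD[OF powser_uniform_limit[OF this, of 0] assms(4)]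
  obtain N where "\<forall>n\<ge>N. \<forall>w\<in>cball 0 r. dist (\<Sum>i<n. c i * (w - 0) ^ i) (suminf (\<lambda>i. c i * (w - 0) ^ i)) < e"
    unfolding eventually_sequentially by blast
  then have N: "\<forall>w\<in>cball 0 r. dist (\<Sum>i<Suc N. c i * w ^ i) (suminf (\<lambda>i. c i * w ^ i)) < e"
    using le_SucI[OF order_refl, of N] by (simp del: sum.lessThan_Suc)
  show ?thesis
  proof (rule that[of c N])
    show "c 0 = h 0" by (simp add: c_def)
    show "\<forall>w. norm w \<le> r \<longrightarrow> norm (h w - (\<Sum>n<Suc N. c n * w ^ n)) \<le> e"
    proof (intro allI impI)
      fix w :: complex assume w: "norm w \<le> r"
      then have "suminf (\<lambda>i. c i * w ^ i) = h w"
        using sums assms by (simp add: sums_iff)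
      moreover have "dist (\<Sum>i<Suc N. c i * w ^ i) (suminf (\<lambda>i. c i * w ^ i)) < e"
        using N w by simp
      ultimately have "norm (h w - (\<Sum>n<Suc N. c n * w ^ n)) < e"
        by (simp add: dist_norm norm_minus_commute)
      then show "norm (h w - (\<Sum>n<Suc N. c n * w ^ n)) \<le> e"
        by simp
    qed
  qed
qed

lemma norm_sum_power_unimodular_le:
  fixes x :: complex
  assumes "norm x = 1" "x \<noteq> 1"
  shows "norm (\<Sum>j<k. x ^ j) \<le> 2 / norm (1 - x)"
proof -
  have "norm (1 - x ^ k) \<le> norm (1::complex) + norm (x ^ k)"
    by (rule norm_triangle_ineq4)
  also have "\<dots> = 2"
    using assms by (simp add: norm_power)
  finally show ?thesis
    using assms by (simp add: sum_gp_strict norm_divide divide_right_mono)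
qed

lemma norm_birkhoff_sum_monomial_le:
  fixes \<gamma> z :: complex
  assumes "norm \<gamma> = 1" "\<gamma> ^ n \<noteq> 1" "norm z \<le> 1"
  shows "norm (\<Sum>j<k. (\<gamma> ^ j * z) ^ n) \<le> 2 / norm (1 - \<gamma> ^ n)"
proof -
  have "(\<Sum>j<k. (\<gamma> ^ j * z) ^ n) = z ^ n * (\<Sum>j<k. (\<gamma> ^ n) ^ j)"
    by (simp add: sum_distrib_left power_mult_distrib mult.commute flip: power_mult)
  also have "norm \<dots> \<le> 1 * (2 / norm (1 - \<gamma> ^ n))"
    unfolding norm_mult using assms norm_sum_power_unimodular_le[of "\<gamma> ^ n" k]
    by (intro mult_mono) (auto simp: norm_power power_le_one)
  finally show ?thesis by simp
qed

text \<open>Birkhoff sums of a holomorphic function along an irrational rotation grow like \<open>k h(0)\<close>: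
  approximate by a polynomial, whose non-constant monomials have bounded Birkhoff sums.\<close>
lemma norm_birkhoff_sum_sub_le:
  fixes h :: "complex \<Rightarrow> complex" and \<gamma> :: complex
  assumes \<gamma>: "norm \<gamma> = 1" "\<forall>n::nat. n \<ge> 1 \<longrightarrow> \<gamma> ^ n \<noteq> 1"
    and h: "h holomorphic_on ball 0 1" and r: "0 \<le> r" "r < 1" and e: "e > 0"
  obtains B where "\<forall>k z. norm z \<le> r \<longrightarrow> norm ((\<Sum>j<k. h (\<gamma> ^ j * z)) - of_nat k * h 0) \<le> real k * e + B"
proof -
  obtain c N where c0: "c 0 = h 0"
    and approx: "\<forall>w. norm w \<le> r \<longrightarrow> norm (h w - (\<Sum>n<Suc N. c n * w ^ n)) \<le> e"
    using holomorphic_polynomial_approximation[OF h r e] by blast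
  define p where "p w = (\<Sum>n<Suc N. c n * w ^ n)" for w
  define B where "B = (\<Sum>n<N. norm (c (Suc n)) * (2 / norm (1 - \<gamma> ^ Suc n)))"
  show ?thesis
  proof (rule that[of B], intro allI impI)
    fix k :: nat and z :: complex
    assume z: "norm z \<le> r"
    have "norm (\<Sum>j<k. h (\<gamma> ^ j * z) - p (\<gamma> ^ j * z)) \<le> (\<Sum>j<k. e)"
      using approx z \<gamma>(1)
      by (intro order.trans[OF norm_sum] sum_mono) (simp add: p_def norm_power_mult_unimodular)
    then have approx_sum: "norm ((\<Sum>j<k. h (\<gamma> ^ j * z)) - (\<Sum>j<k. p (\<gamma> ^ j * z))) \<le> real k * e"
      by (simp add: sum_subtractf)
    have "(\<Sum>j<k. p (\<gamma> ^ j * z)) = (\<Sum>n<Suc N. c n * (\<Sum>j<k. (\<gamma> ^ j * z) ^ n))"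
      unfolding p_def by (simp add: sum_distrib_left sum.swap[of _ "{..<k}"])
    also have "\<dots> = of_nat k * h 0 + (\<Sum>n<N. c (Suc n) * (\<Sum>j<k. (\<gamma> ^ j * z) ^ Suc n))"
      by (subst sum.lessThan_Suc_shift) (simp add: c0 del: power_Suc)
    finally have poly_sum: "(\<Sum>j<k. p (\<gamma> ^ j * z)) - of_nat k * h 0
        = (\<Sum>n<N. c (Suc n) * (\<Sum>j<k. (\<gamma> ^ j * z) ^ Suc n))" by simp
    have "norm (c (Suc n) * (\<Sum>j<k. (\<gamma> ^ j * z) ^ Suc n))
        \<le> norm (c (Suc n)) * (2 / norm (1 - \<gamma> ^ Suc n))" for n
      unfolding norm_mult using \<gamma> z r
      by (intro mult_left_mono norm_birkhoff_sum_monomial_le) auto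
    then have "norm (\<Sum>n<N. c (Suc n) * (\<Sum>j<k. (\<gamma> ^ j * z) ^ Suc n)) \<le> B"
      unfolding B_def by (intro order.trans[OF norm_sum] sum_mono)
    then have poly_bound: "norm ((\<Sum>j<k. p (\<gamma> ^ j * z)) - of_nat k * h 0) \<le> B"
      by (simp only: poly_sum)
    have "(\<Sum>j<k. h (\<gamma> ^ j * z)) - of_nat k * h 0
        = ((\<Sum>j<k. h (\<gamma> ^ j * z)) - (\<Sum>j<k. p (\<gamma> ^ j * z))) + ((\<Sum>j<k. p (\<gamma> ^ j * z)) - of_nat k * h 0)"
      by simp
    also have "norm \<dots> \<le> norm ((\<Sum>j<k. h (\<gamma> ^ j * z)) - (\<Sum>j<k. p (\<gamma> ^ j * z)))
        + norm ((\<Sum>j<k. p (\<gamma> ^ j * z)) - of_nat k * h 0)"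
      by (rule norm_triangle_ineq)
    also have "\<dots> \<le> real k * e + B"
      using approx_sum poly_bound by (rule add_mono)
    finally show "norm ((\<Sum>j<k. h (\<gamma> ^ j * z)) - of_nat k * h 0) \<le> real k * e + B" .
  qed
qed

lemma norm_cocycle_le:
  fixes m :: "complex \<Rightarrow> complex" and \<gamma> :: complex
  assumes \<gamma>: "norm \<gamma> = 1" "\<forall>n::nat. n \<ge> 1 \<longrightarrow> \<gamma> ^ n \<noteq> 1"
    and m: "m holomorphic_on ball 0 1" "\<forall>z\<in>ball 0 1. m z \<noteq> 0"
    and q: "q > 1" and r: "0 \<le> r" "r < 1"
  obtains C where "C \<ge> 0" "\<forall>k z. norm z \<le> r \<longrightarrow> norm (cocycle m \<gamma> k z) \<le> C * (q * norm (m 0)) ^ k"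
proof -
  obtain h where h: "h holomorphic_on ball 0 1" "\<And>z. z \<in> ball 0 1 \<Longrightarrow> exp (h z) = m z"
    using holomorphic_logarithm_exists[of "ball 0 1" m 0] m by auto
  obtain B where B: "\<forall>k z. norm z \<le> r \<longrightarrow>
      norm ((\<Sum>j<k. h (\<gamma> ^ j * z)) - of_nat k * h 0) \<le> real k * ln q + B"
    using norm_birkhoff_sum_sub_le[OF \<gamma> h(1) r, of "ln q"] q by auto
  have m0: "norm (m 0) = exp (Re (h 0))"
    using h(2)[of 0] by (simp flip: norm_exp_eq_Re)
  show ?thesis
  proof (rule that[of "exp B"], simp, intro allI impI)
    fix k :: nat and z :: complex
    assume z: "norm z \<le> r"
    have "cocycle m \<gamma> k z = (\<Prod>j<k. exp (h (\<gamma> ^ j * z)))"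
      unfolding cocycle_def using h(2) \<gamma>(1) z r
      by (intro prod.cong refl) (simp add: norm_power_mult_unimodular)
    then have "norm (cocycle m \<gamma> k z) = exp (Re (\<Sum>j<k. h (\<gamma> ^ j * z)))"
      by (simp add: exp_sum[symmetric] norm_exp_eq_Re)
    also have "\<dots> \<le> exp (B + real k * (ln q + Re (h 0)))"
    proof -
      have "Re (\<Sum>j<k. h (\<gamma> ^ j * z)) - real k * Re (h 0)
          \<le> norm ((\<Sum>j<k. h (\<gamma> ^ j * z)) - of_nat k * h 0)"
        using complex_Re_le_cmod[of "(\<Sum>j<k. h (\<gamma> ^ j * z)) - of_nat k * h 0"] by simp
      also have "\<dots> \<le> real k * ln q + B"
        using B z by blast
      finally show ?thesis
        by (simp add: algebra_simps)
    qed
    also have "\<dots> = exp B * (q * norm (m 0)) ^ k"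
      using q by (simp add: distrib_left exp_add exp_of_nat_mult m0 power_mult_distrib)
    finally show "norm (cocycle m \<gamma> k z) \<le> exp B * (q * norm (m 0)) ^ k" .
  qed
qed

text \<open>With \<open>A f = a \<cdot> f(\<gamma> \<cdot>)\<close> one has \<open>A\<^sup>k g = cocycle a \<gamma> k \<cdot> g(\<gamma>\<^sup>k \<cdot>)\<close>, so this is
  \<open>\<Sum> A\<^sup>k g / l\<^sup>k\<^sup>+\<^sup>1\<close>, the formal inverse of \<open>l - A\<close> applied to \<open>g\<close>.\<close>
definition neumann_series ::
    "(complex \<Rightarrow> complex) \<Rightarrow> complex \<Rightarrow> complex \<Rightarrow> (complex \<Rightarrow> complex) \<Rightarrow> complex \<Rightarrow> complex" where
  "neumann_series a \<gamma> l g z = (\<Sum>k. cocycle a \<gamma> k z * g (\<gamma> ^ k * z) / l ^ Suc k)"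

definition cocycle_growth_le :: "(complex \<Rightarrow> complex) \<Rightarrow> complex \<Rightarrow> real \<Rightarrow> bool" where
  "cocycle_growth_le a \<gamma> \<theta> \<longleftrightarrow>
     (\<forall>r. 0 < r \<longrightarrow> r < 1 \<longrightarrow> (\<exists>C. \<forall>k z. norm z \<le> r \<longrightarrow> norm (cocycle a \<gamma> k z) \<le> C * \<theta> ^ k))"

lemma norm_neumann_term_le:
  assumes "0 < \<rho>" "\<rho> \<le> norm l"
    and "norm (cocycle a \<gamma> k z) \<le> C * \<theta> ^ k" "norm (g (\<gamma> ^ k * z)) \<le> G"
  shows "norm (cocycle a \<gamma> k z * g (\<gamma> ^ k * z) / l ^ Suc k) \<le> C * G / \<rho> * (\<theta> / \<rho>) ^ k"
proof -
  have "norm (cocycle a \<gamma> k z * g (\<gamma> ^ k * z) / l ^ Suc k)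
      = norm (cocycle a \<gamma> k z) * norm (g (\<gamma> ^ k * z)) / norm l ^ Suc k"
    by (simp add: norm_mult norm_divide norm_power)
  also have "\<dots> \<le> (C * \<theta> ^ k) * G / \<rho> ^ Suc k"
  proof (rule frac_le)
    have "0 \<le> C * \<theta> ^ k" "0 \<le> G"
      using order_trans[OF norm_ge_zero assms(3)] order_trans[OF norm_ge_zero assms(4)] .
    then show "0 \<le> (C * \<theta> ^ k) * G"
      by simp
    show "norm (cocycle a \<gamma> k z) * norm (g (\<gamma> ^ k * z)) \<le> (C * \<theta> ^ k) * G"
      by (rule mult_mono) (use assms(3,4) \<open>0 \<le> C * \<theta> ^ k\<close> in auto)
    show "0 < \<rho> ^ Suc k"
      using assms(1) by simp
    show "\<rho> ^ Suc k \<le> norm l ^ Suc k"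
      using assms(1,2) by (intro power_mono) auto
  qed
  also have "\<dots> = C * G / \<rho> * (\<theta> / \<rho>) ^ k"
    by (simp add: power_divide field_simps)
  finally show ?thesis .
qed

lemma neumann_majorant_sums:
  fixes \<theta> \<rho> :: real
  assumes "0 \<le> \<theta>" "\<theta> < \<rho>"
  shows "(\<lambda>k. C * G / \<rho> * (\<theta> / \<rho>) ^ k) sums (C * G / (\<rho> - \<theta>))"
proof -
  have "norm (\<theta> / \<rho>) < 1"
    using assms by simp
  from sums_mult[OF geometric_sums[OF this], of "C * G / \<rho>"]
  have "(\<lambda>k. C * G / \<rho> * (\<theta> / \<rho>) ^ k) sums (C * G / \<rho> * (1 / (1 - \<theta> / \<rho>)))" .
  also have "C * G / \<rho> * (1 / (1 - \<theta> / \<rho>)) = C * G / (\<rho> - \<theta>)"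
    using assms by (simp add: field_simps)
  finally show ?thesis .
qed

lemma norm_neumann_series_le:
  assumes "0 \<le> \<theta>" "\<theta> < \<rho>" "\<rho> \<le> norm l"
    and "\<forall>k. norm (cocycle a \<gamma> k z) \<le> C * \<theta> ^ k" "\<forall>k. norm (g (\<gamma> ^ k * z)) \<le> G"
  shows "summable (\<lambda>k. cocycle a \<gamma> k z * g (\<gamma> ^ k * z) / l ^ Suc k)"
    and "norm (neumann_series a \<gamma> l g z) \<le> C * G / (\<rho> - \<theta>)"
proof -
  have majorant: "(\<lambda>k. C * G / \<rho> * (\<theta> / \<rho>) ^ k) sums (C * G / (\<rho> - \<theta>))"
    using neumann_majorant_sums[OF assms(1,2)] .
  have bound: "norm (cocycle a \<gamma> k z * g (\<gamma> ^ k * z) / l ^ Suc k) \<le> C * G / \<rho> * (\<theta> / \<rho>) ^ k" for k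
  proof (rule norm_neumann_term_le)
    show "0 < \<rho>" "\<rho> \<le> norm l"
      using assms(1-3) by simp_all
    show "norm (cocycle a \<gamma> k z) \<le> C * \<theta> ^ k" "norm (g (\<gamma> ^ k * z)) \<le> G"
      using assms(4,5) by simp_all
  qed
  show "summable (\<lambda>k. cocycle a \<gamma> k z * g (\<gamma> ^ k * z) / l ^ Suc k)"
    using summable_comparison_test'[OF sums_summable[OF majorant] bound] .
  have "norm (neumann_series a \<gamma> l g z) \<le> (\<Sum>k. C * G / \<rho> * (\<theta> / \<rho>) ^ k)"
    unfolding neumann_series_def using bound sums_summable[OF majorant] by (rule norm_suminf_le)
  then show "norm (neumann_series a \<gamma> l g z) \<le> C * G / (\<rho> - \<theta>)"
    using majorant by (simp add: sums_iff)
qed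

lemma weighted_rotation_solution_expansion:
  assumes "norm \<gamma> = 1" "l \<noteq> 0" "solves (weighted_rotation a \<gamma>) l g f" "z \<in> ball 0 1"
  shows "f z = (\<Sum>k<n. cocycle a \<gamma> k z * g (\<gamma> ^ k * z) / l ^ Suc k)
             + cocycle a \<gamma> n z * f (\<gamma> ^ n * z) / l ^ n"
proof (induction n)
  case 0
  then show ?case by simp
next
  case (Suc n)
  define w where "w = \<gamma> ^ n * z"
  have "w \<in> ball 0 1"
    using assms(1,4) by (simp add: w_def norm_power_mult_unimodular)
  then have "l * f w - a w * f (\<gamma> * w) = g w"
    using assms(3) by (simp add: solves_weighted_rotation)
  then have eq: "l * f w = g w + a w * f (\<gamma> ^ Suc n * z)"
    by (simp add: w_def mult.assoc diff_eq_eq)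
  have "cocycle a \<gamma> n z * f w / l ^ n = cocycle a \<gamma> n z * (l * f w) / l ^ Suc n"
    using assms(2) by simp
  also have "\<dots> = cocycle a \<gamma> n z * g w / l ^ Suc n
      + cocycle a \<gamma> (Suc n) z * f (\<gamma> ^ Suc n * z) / l ^ Suc n"
    unfolding eq by (simp add: cocycle_Suc w_def ring_distribs add_divide_distrib mult.assoc)
  finally show ?case
    using Suc.IH by (simp add: w_def)
qed

lemma weighted_rotation_solution_sums:
  assumes "norm \<gamma> = 1" "0 \<le> \<theta>" "\<theta> < \<rho>" "\<rho> \<le> norm l"
    and f: "f holomorphic_on ball 0 1" "solves (weighted_rotation a \<gamma>) l g f"
    and z: "z \<in> ball 0 1" and C: "\<forall>k. norm (cocycle a \<gamma> k z) \<le> C * \<theta> ^ k"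
  shows "(\<lambda>k. cocycle a \<gamma> k z * g (\<gamma> ^ k * z) / l ^ Suc k) sums f z"
proof -
  obtain U where U: "\<forall>w. norm w \<le> norm z \<longrightarrow> norm (f w) \<le> U"
    using holomorphic_bounded_on_cball[OF f(1)] z by auto
  define R where "R n = cocycle a \<gamma> n z * f (\<gamma> ^ n * z) / l ^ n" for n
  have l: "l \<noteq> 0"
    using assms by auto
  have bound: "\<forall>n. norm (R n) \<le> C * U * (\<theta> / \<rho>) ^ n"
  proof
    fix n
    have "norm (R n) = norm (cocycle a \<gamma> n z) * norm (f (\<gamma> ^ n * z)) / norm l ^ n"
      by (simp add: R_def norm_mult norm_divide norm_power)
    also have "\<dots> \<le> (C * \<theta> ^ n) * U / \<rho> ^ n"
    proof (rule frac_le)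
      have "0 \<le> C * \<theta> ^ n" "0 \<le> U"
        using order_trans[OF norm_ge_zero C[rule_format]] order_trans[OF norm_ge_zero U[rule_format, of z]]
        by simp_all
      then show "0 \<le> (C * \<theta> ^ n) * U"
        by simp
      have "norm (f (\<gamma> ^ n * z)) \<le> U"
        using U assms(1) by (simp add: norm_power_mult_unimodular)
      then show "norm (cocycle a \<gamma> n z) * norm (f (\<gamma> ^ n * z)) \<le> (C * \<theta> ^ n) * U"
        by (rule mult_mono[OF C[rule_format] _ \<open>0 \<le> C * \<theta> ^ n\<close> norm_ge_zero])
      show "0 < \<rho> ^ n"
        using assms(2,3) by simp
      show "\<rho> ^ n \<le> norm l ^ n"
        using assms(2-4) by (intro power_mono) auto
    qed
    finally show "norm (R n) \<le> C * U * (\<theta> / \<rho>) ^ n"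
      by (simp add: power_divide mult_ac)
  qed
  have "(\<lambda>n. C * U * (\<theta> / \<rho>) ^ n) \<longlonglongrightarrow> C * U * 0"
    using assms by (intro tendsto_mult_left LIMSEQ_power_zero) simp
  then have "R \<longlonglongrightarrow> 0"
    using Lim_null_comparison[OF always_eventually[OF bound]] by simp
  then have "(\<lambda>n. f z - R n) \<longlonglongrightarrow> f z - 0"
    by (intro tendsto_diff tendsto_const)
  moreover have "f z - R n = (\<Sum>k<n. cocycle a \<gamma> k z * g (\<gamma> ^ k * z) / l ^ Suc k)" for n
    using weighted_rotation_solution_expansion[OF assms(1) l f(2) z, of n] by (simp add: R_def)
  ultimately show ?thesis
    by (simp add: sums_def)
qed

text \<open>An a priori bound: every holomorphic solution is the Neumann series, whatever \<open>a\<close> is.\<close>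
lemma norm_weighted_rotation_solution_le:
  assumes "norm \<gamma> = 1" "0 \<le> \<theta>" "\<theta> < \<rho>" "\<rho> \<le> norm l"
    and "f holomorphic_on ball 0 1" "solves (weighted_rotation a \<gamma>) l g f" "r < 1"
    and "\<forall>k w. norm w \<le> r \<longrightarrow> norm (cocycle a \<gamma> k w) \<le> C * \<theta> ^ k"
    and "\<forall>w. norm w \<le> r \<longrightarrow> norm (g w) \<le> B" and "norm z \<le> r"
  shows "norm (f z) \<le> C * B / (\<rho> - \<theta>)"
proof -
  have z: "z \<in> ball 0 1"
    using assms(7,10) by simp
  have C: "\<forall>k. norm (cocycle a \<gamma> k z) \<le> C * \<theta> ^ k" and B: "\<forall>k. norm (g (\<gamma> ^ k * z)) \<le> B"
    using assms(1,8-10) by (simp_all add: norm_power_mult_unimodular)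
  have "f z = neumann_series a \<gamma> l g z"
    unfolding neumann_series_def using weighted_rotation_solution_sums[OF assms(1-6) z C]
    by (simp add: sums_iff)
  then show ?thesis
    using norm_neumann_series_le(2)[OF assms(2-4) C B] by simp
qed

lemma neumann_terms_locally_dominated:
  assumes "norm \<gamma> = 1" "0 \<le> \<theta>" "\<theta> < \<rho>" "\<rho> \<le> norm l"
    and "g holomorphic_on ball 0 1" "cocycle_growth_le a \<gamma> \<theta>" "x \<in> ball 0 1"
  obtains d M where "d > 0" "cball x d \<subseteq> ball 0 1" "summable M"
    "\<forall>k. \<forall>w\<in>cball x d. norm (cocycle a \<gamma> k w * g (\<gamma> ^ k * w) / l ^ Suc k) \<le> M k"
proof -
  obtain r d where r: "0 < r" "r < 1" "0 < d" "cball x d \<subseteq> cball 0 r"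
    using unit_disc_cball_neighbourhood[OF assms(7)] .
  obtain C where C: "\<forall>k w. norm w \<le> r \<longrightarrow> norm (cocycle a \<gamma> k w) \<le> C * \<theta> ^ k"
    using assms(6) r unfolding cocycle_growth_le_def by blast
  obtain G where G: "\<forall>w. norm w \<le> r \<longrightarrow> norm (g w) \<le> G"
    using holomorphic_bounded_on_cball[OF assms(5) r(2)] .
  show ?thesis
  proof (rule that)
    show "d > 0"
      using r(3) .
    have "cball (0::complex) r \<subseteq> ball 0 1"
      using r(2) by (simp add: subset_iff)
    then show "cball x d \<subseteq> ball 0 1"
      using r(4) by (rule order.trans[rotated])
    show "summable (\<lambda>k. C * G / \<rho> * (\<theta> / \<rho>) ^ k)"
      using neumann_majorant_sums[OF assms(2,3)] by (auto simp: sums_iff)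
    show "\<forall>k. \<forall>w\<in>cball x d. norm (cocycle a \<gamma> k w * g (\<gamma> ^ k * w) / l ^ Suc k)
        \<le> C * G / \<rho> * (\<theta> / \<rho>) ^ k"
    proof (intro allI ballI)
      fix k w
      assume "w \<in> cball x d"
      then have w: "norm w \<le> r"
        using r(4) by auto
      show "norm (cocycle a \<gamma> k w * g (\<gamma> ^ k * w) / l ^ Suc k) \<le> C * G / \<rho> * (\<theta> / \<rho>) ^ k"
        by (rule norm_neumann_term_le)
          (use assms(1-4) C G w in \<open>simp_all add: norm_power_mult_unimodular\<close>)
    qed
  qed
qed

lemma holomorphic_neumann_series:
  assumes "norm \<gamma> = 1" "0 \<le> \<theta>" "\<theta> < \<rho>" "\<rho> \<le> norm l"
    and "a holomorphic_on ball 0 1" "g holomorphic_on ball 0 1" "cocycle_growth_le a \<gamma> \<theta>"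
  shows "neumann_series a \<gamma> l g holomorphic_on ball 0 1"
  unfolding neumann_series_def[abs_def]
proof (rule holomorphic_uniform_sequence[OF open_ball])
  fix n
  have "(\<lambda>z. g (\<gamma> ^ k * z)) holomorphic_on ball 0 1" for k
    using holomorphic_on_rotate[OF assms(6), of "\<gamma> ^ k"] assms(1) by (simp add: norm_power)
  then show "(\<lambda>z. \<Sum>k<n. cocycle a \<gamma> k z * g (\<gamma> ^ k * z) / l ^ Suc k) holomorphic_on ball 0 1"
    using holomorphic_cocycle[OF assms(5,1)] by (intro holomorphic_intros) auto
next
  fix x :: complex
  assume "x \<in> ball 0 1"
  then obtain d M where "d > 0" "cball x d \<subseteq> ball 0 1" "summable M"
    "\<forall>k. \<forall>w\<in>cball x d. norm (cocycle a \<gamma> k w * g (\<gamma> ^ k * w) / l ^ Suc k) \<le> M k"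
    using neumann_terms_locally_dominated[OF assms(1-4,6,7)] by blast
  moreover have "uniform_limit (cball x d)
      (\<lambda>n z. \<Sum>k<n. cocycle a \<gamma> k z * g (\<gamma> ^ k * z) / l ^ Suc k)
      (\<lambda>z. \<Sum>k. cocycle a \<gamma> k z * g (\<gamma> ^ k * z) / l ^ Suc k) sequentially"
    by (rule Weierstrass_m_test) (use calculation in auto)
  ultimately show "\<exists>d>0. cball x d \<subseteq> ball 0 1 \<and> uniform_limit (cball x d)
      (\<lambda>n z. \<Sum>k<n. cocycle a \<gamma> k z * g (\<gamma> ^ k * z) / l ^ Suc k)
      (\<lambda>z. \<Sum>k. cocycle a \<gamma> k z * g (\<gamma> ^ k * z) / l ^ Suc k) sequentially"
    by blast
qed

lemma solves_neumann_series:
  assumes "norm \<gamma> = 1" "0 \<le> \<theta>" "\<theta> < \<rho>" "\<rho> \<le> norm l"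
    and "g holomorphic_on ball 0 1" "cocycle_growth_le a \<gamma> \<theta>"
  shows "solves (weighted_rotation a \<gamma>) l g (neumann_series a \<gamma> l g)"
  unfolding solves_weighted_rotation
proof
  fix z :: complex
  assume z: "z \<in> ball 0 1"
  define t where "t k w = cocycle a \<gamma> k w * g (\<gamma> ^ k * w) / l ^ Suc k" for k w
  define s where "s k = cocycle a \<gamma> k z * g (\<gamma> ^ k * z) / l ^ k" for k
  have summable: "summable (\<lambda>k. t k w)" if w: "w \<in> ball 0 1" for w
  proof -
    obtain d M where dM: "d > 0" "cball w d \<subseteq> ball 0 1" "summable M"
      "\<forall>k. \<forall>v\<in>cball w d. norm (cocycle a \<gamma> k v * g (\<gamma> ^ k * v) / l ^ Suc k) \<le> M k"
      by (rule neumann_terms_locally_dominated[OF assms w])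
    then have "norm (t k w) \<le> M k" for k
      by (simp add: t_def)
    then show ?thesis
      by (intro summable_comparison_test'[OF dM(3)])
  qed
  have l: "l \<noteq> 0"
    using assms by auto
  have series: "neumann_series a \<gamma> l g w = (\<Sum>k. t k w)" for w
    by (simp add: neumann_series_def t_def)
  have "\<gamma> * z \<in> ball 0 1"
    using assms(1) z by (simp add: norm_mult)
  from sums_mult[OF summable_sums[OF summable[OF this]], of "a z"]
  have "(\<lambda>k. a z * t k (\<gamma> * z)) sums (a z * neumann_series a \<gamma> l g (\<gamma> * z))"
    by (simp only: series)
  moreover have "a z * t k (\<gamma> * z) = s (Suc k)" for k
    by (simp add: t_def s_def cocycle_Suc_left mult_ac)
  ultimately have "(\<lambda>k. s (Suc k)) sums (a z * neumann_series a \<gamma> l g (\<gamma> * z))"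
    by simp
  then have "s sums (a z * neumann_series a \<gamma> l g (\<gamma> * z) + s 0)"
    by (rule sums_Suc)
  moreover from sums_mult[OF summable_sums[OF summable[OF z]], of l]
  have "(\<lambda>k. l * t k z) sums (l * neumann_series a \<gamma> l g z)"
    by (simp only: series)
  moreover have "l * t k z = s k" for k
    using l by (simp add: t_def s_def field_simps)
  ultimately have "l * neumann_series a \<gamma> l g z = a z * neumann_series a \<gamma> l g (\<gamma> * z) + s 0"
    using sums_unique2 by simp
  then show "l * neumann_series a \<gamma> l g z - a z * neumann_series a \<gamma> l g (\<gamma> * z) = g z"
    by (simp add: s_def)
qed

lemma solves_weighted_rotation_divide_by_z:
  assumes "norm \<beta> = 1" "a holomorphic_on ball 0 1" "h holomorphic_on ball 0 1" "p holomorphic_on ball 0 1"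
    and "h 0 = 0" and "solves (weighted_rotation a \<beta>) l (\<lambda>z. z * p z) h"
  obtains h' where "h' holomorphic_on ball 0 1" "solves (weighted_rotation (\<lambda>z. \<beta> * a z) \<beta>) l p h'"
proof -
  define h' where "h' z = (if z = 0 then deriv h 0 else (h z - h 0) / (z - 0))" for z
  have h': "h' holomorphic_on ball 0 1"
    unfolding h'_def[abs_def] by (rule pole_lemma[OF assms(3)]) simp
  have factor: "h z = z * h' z" for z
    using assms(5) by (simp add: h'_def)
  define \<phi> where "\<phi> z = l * h' z - \<beta> * a z * h' (\<beta> * z) - p z" for z
  have \<phi>_off_0: "\<phi> z = 0" if "z \<in> ball 0 1" "z \<noteq> 0" for z
  proof -
    have "z * \<phi> z = l * h z - a z * h (\<beta> * z) - z * p z"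
      by (simp add: \<phi>_def factor algebra_simps)
    also have "\<dots> = 0"
      using assms(6) that(1) by (simp add: solves_weighted_rotation)
    finally show ?thesis
      using that(2) by simp
  qed
  have "continuous_on (ball 0 1) \<phi>"
    unfolding \<phi>_def[abs_def] using h' holomorphic_on_rotate[OF h' assms(1)] assms(2,4)
    by (intro holomorphic_on_imp_continuous_on holomorphic_intros)
  then have "(\<phi> \<longlongrightarrow> \<phi> 0) (at 0)"
    by (simp add: continuous_on_eq_continuous_at isContD)
  moreover have "(\<phi> \<longlongrightarrow> 0) (at 0)"
    by (rule tendsto_eventually) (auto simp: eventually_at dist_norm \<phi>_off_0 intro!: exI[of _ 1])
  ultimately have "\<phi> 0 = 0"
    using tendsto_unique trivial_limit_at by blast
  with \<phi>_off_0 have "\<phi> z = 0" if "z \<in> ball 0 1" for z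
    using that by (cases "z = 0") auto
  then have "solves (weighted_rotation (\<lambda>z. \<beta> * a z) \<beta>) l p h'"
    by (simp add: solves_weighted_rotation \<phi>_def)
  with h' show ?thesis
    using that by blast
qed

text \<open>Peeling off one power of \<open>z\<close> at a time: the eigenvalue \<open>\<beta>\<^sup>n m(0)\<close> differs from
  \<open>\<beta>\<^sup>k m(0)\<close> for \<open>k < n\<close>, which forces the solution to vanish at \<open>0\<close>.\<close>
lemma power_not_in_range_weighted_rotation:
  fixes \<beta> :: complex and m f :: "complex \<Rightarrow> complex"
  assumes \<beta>: "norm \<beta> = 1" "\<forall>j::nat. j \<ge> 1 \<longrightarrow> \<beta> ^ j \<noteq> 1"
    and m: "m holomorphic_on ball 0 1" "m 0 \<noteq> 0" and f: "f holomorphic_on ball 0 1"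
  shows "\<not> solves (weighted_rotation m \<beta>) (\<beta> ^ n * m 0) (\<lambda>z. z ^ n) f"
proof
  define l where "l = \<beta> ^ n * m 0"
  assume "solves (weighted_rotation m \<beta>) (\<beta> ^ n * m 0) (\<lambda>z. z ^ n) f"
  then have "\<exists>h. h holomorphic_on ball 0 1 \<and>
      solves (weighted_rotation (\<lambda>z. \<beta> ^ k * m z) \<beta>) l (\<lambda>z. z ^ (n - k)) h" if "k \<le> n" for k
    using that
  proof (induction k)
    case 0
    then show ?case
      using f by (auto simp: l_def)
  next
    case (Suc k)
    then obtain h where h: "h holomorphic_on ball 0 1"
      "solves (weighted_rotation (\<lambda>z. \<beta> ^ k * m z) \<beta>) l (\<lambda>z. z ^ (n - k)) h"
      by auto
    have k: "k < n"
      using Suc.prems by simp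
    have "\<beta> ^ n = \<beta> ^ k * \<beta> ^ (n - k)"
      using k by (simp flip: power_add)
    then have "l - \<beta> ^ k * m 0 = \<beta> ^ k * (\<beta> ^ (n - k) - 1) * m 0"
      by (simp add: l_def algebra_simps)
    moreover have "\<beta> ^ k * (\<beta> ^ (n - k) - 1) * m 0 \<noteq> 0"
      using \<beta> k m(2) by auto
    ultimately have "l - \<beta> ^ k * m 0 \<noteq> 0"
      by simp
    moreover have "(l - \<beta> ^ k * m 0) * h 0 = 0"
      using h(2)[unfolded solves_weighted_rotation, rule_format, of 0] k by (simp add: algebra_simps)
    ultimately have "h 0 = 0"
      by simp
    moreover have "solves (weighted_rotation (\<lambda>z. \<beta> ^ k * m z) \<beta>) l (\<lambda>z. z * z ^ (n - Suc k)) h"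
      using h(2) k by (simp add: Suc_diff_Suc flip: power_Suc)
    moreover have "(\<lambda>z. \<beta> ^ k * m z) holomorphic_on ball 0 1"
      using m(1) by (intro holomorphic_intros)
    moreover have "(\<lambda>z. z ^ (n - Suc k)) holomorphic_on ball 0 1"
      by (intro holomorphic_intros)
    ultimately obtain h' where "h' holomorphic_on ball 0 1"
      "solves (weighted_rotation (\<lambda>z. \<beta> * (\<beta> ^ k * m z)) \<beta>) l (\<lambda>z. z ^ (n - Suc k)) h'"
      using solves_weighted_rotation_divide_by_z[OF \<beta>(1) _ h(1)] by blast
    then show ?case
      by (auto simp: mult.assoc)
  qed
  from this[OF order_refl] obtain h where "solves (weighted_rotation (\<lambda>z. \<beta> ^ n * m z) \<beta>) l (\<lambda>_. 1) h"
    by auto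
  then have "l * h 0 - \<beta> ^ n * m 0 * h (\<beta> * 0) = 1"
    unfolding solves_weighted_rotation by (rule bspec) simp
  then show False
    by (simp add: l_def)
qed

lemma power_mult_not_in_hol_resolvent_set:
  fixes \<beta> :: complex and m :: "complex \<Rightarrow> complex"
  assumes "norm \<beta> = 1" "\<forall>j::nat. j \<ge> 1 \<longrightarrow> \<beta> ^ j \<noteq> 1" "m holomorphic_on ball 0 1" "m 0 \<noteq> 0"
  shows "\<beta> ^ n * m 0 \<notin> hol_resolvent_set (weighted_rotation m \<beta>)"
proof
  assume "\<beta> ^ n * m 0 \<in> hol_resolvent_set (weighted_rotation m \<beta>)"
  moreover have "(\<lambda>z. z ^ n) \<in> HolD"
    by (simp add: HolD_def holomorphic_intros)
  ultimately obtain f where "f \<in> HolD" "solves (weighted_rotation m \<beta>) (\<beta> ^ n * m 0) (\<lambda>z. z ^ n) f"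
    unfolding hol_resolvent_set_def by blast
  then show False
    using power_not_in_range_weighted_rotation[OF assms] by (simp add: HolD_def)
qed

lemma unimodular_power_approx:
  fixes \<beta> w :: complex
  assumes \<beta>: "norm \<beta> = 1" "\<forall>n::nat. n \<ge> 1 \<longrightarrow> \<beta> ^ n \<noteq> 1" and w: "norm w = 1" and "e > 0"
  obtains n where "norm (\<beta> ^ n - w) < e"
proof -
  define \<theta> where "\<theta> = Arg \<beta> / (2 * pi)"
  define \<alpha> where "\<alpha> = Arg w / (2 * pi)"
  have "\<beta> \<noteq> 0" "w \<noteq> 0"
    using \<beta>(1) w by auto
  then have \<beta>_cis: "\<beta> = cis (2 * pi * \<theta>)" and w_cis: "w = cis (2 * pi * \<alpha>)"
    using cis_Arg[of \<beta>] cis_Arg[of w] \<beta>(1) w by (simp_all add: \<theta>_def \<alpha>_def sgn_div_norm)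
  have "\<theta> \<notin> \<rat>"
  proof
    assume "\<theta> \<in> \<rat>"
    then obtain p q where pq: "q > 0" "\<theta> = of_int p / of_int q"
      by (auto elim: Rats_cases')
    have "\<beta> ^ nat q = cis (real (nat q) * (2 * pi * \<theta>))"
      by (subst \<beta>_cis) (rule Complex.DeMoivre)
    also have "real (nat q) * (2 * pi * \<theta>) = 2 * pi * of_int p"
      using pq by (simp add: field_simps)
    also have "cis (2 * pi * of_int p) = 1"
      by (rule cis_multiple_2pi) simp
    finally have "\<beta> ^ nat q = 1" .
    moreover have "nat q \<ge> 1"
      using pq(1) by simp
    ultimately show False
      using \<beta>(2) by blast
  qed
  have "continuous_on UNIV (\<lambda>x::real. cis (2 * pi * x))"
    by (intro continuous_intros)
  then have "\<exists>d>0. \<forall>x. dist x \<alpha> < d \<longrightarrow> dist (cis (2 * pi * x)) (cis (2 * pi * \<alpha>)) < e"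
    using \<open>e > 0\<close> unfolding continuous_on_iff by simp
  then obtain d where d: "d > 0" "\<And>x. \<bar>x - \<alpha>\<bar> < d \<Longrightarrow> norm (cis (2 * pi * x) - cis (2 * pi * \<alpha>)) < e"
    by (auto simp: dist_norm dist_real_def)
  obtain h k where hk: "k > 0" "\<bar>of_int k * \<theta> - of_int h - \<alpha>\<bar> < d"
    using sequence_of_fractional_parts_is_dense[OF \<open>\<theta> \<notin> \<rat>\<close> d(1)] by blast
  have "\<beta> ^ nat k = cis (real (nat k) * (2 * pi * \<theta>))"
    by (subst \<beta>_cis) (rule Complex.DeMoivre)
  also have "\<dots> = cis (2 * pi * (of_int k * \<theta>)) / cis (2 * pi * of_int h)"
    using hk(1) cis_multiple_2pi[of "of_int h"] by (simp add: mult_ac)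
  also have "\<dots> = cis (2 * pi * (of_int k * \<theta> - of_int h))"
    by (subst cis_divide) (simp add: right_diff_distrib)
  finally have "norm (\<beta> ^ nat k - w) < e"
    using d(2)[OF hk(2)] w_cis by simp
  then show ?thesis
    by (rule that)
qed

lemma sphere_subset_closure_orbit:
  fixes \<beta> c :: complex
  assumes "norm \<beta> = 1" "\<forall>n::nat. n \<ge> 1 \<longrightarrow> \<beta> ^ n \<noteq> 1"
  shows "sphere 0 (norm c) \<subseteq> closure (range (\<lambda>n. \<beta> ^ n * c))"
proof (cases "c = 0")
  case True
  then show ?thesis
    by simp
next
  case False
  show ?thesis
  proof (intro subsetI iffD2[OF closure_approachable] allI impI)
    fix l :: complex and e :: real
    assume "l \<in> sphere 0 (norm c)" "e > 0"
    then have "norm (l / c) = 1" "e / norm c > 0"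
      using False by (simp_all add: norm_divide)
    then obtain n where n: "norm (\<beta> ^ n - l / c) < e / norm c"
      using unimodular_power_approx[OF assms] by metis
    have "\<beta> ^ n * c - l = c * (\<beta> ^ n - l / c)"
      using False by (simp add: field_simps)
    then have "dist (\<beta> ^ n * c) l = norm c * norm (\<beta> ^ n - l / c)"
      by (simp add: dist_norm norm_mult)
    also have "\<dots> < norm c * (e / norm c)"
      using n False by (intro mult_strict_left_mono) auto
    finally have "dist (\<beta> ^ n * c) l < e"
      using False by simp
    then show "\<exists>y\<in>range (\<lambda>n. \<beta> ^ n * c). dist y l < e"
      by blast
  qed
qed

lemma closure_hol_spectrum_subset_waelbroeck_spectrum:
  "closure (hol_spectrum T) \<subseteq> waelbroeck_spectrum T"
proof
  fix l
  assume l: "l \<in> closure (hol_spectrum T)"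
  show "l \<in> waelbroeck_spectrum T"
    unfolding waelbroeck_spectrum_def
  proof
    assume "l \<in> waelbroeck_resolvent_set T"
    then obtain \<delta> where "\<delta> > 0" "cball l \<delta> \<subseteq> hol_resolvent_set T"
      unfolding waelbroeck_resolvent_set_def by blast
    moreover obtain \<mu> where "\<mu> \<in> hol_spectrum T" "dist \<mu> l < \<delta>"
      using l \<open>\<delta> > 0\<close> closure_approachable by blast
    ultimately have "\<mu> \<in> cball l \<delta>" "\<mu> \<notin> hol_resolvent_set T"
      by (simp_all add: hol_spectrum_def dist_commute)
    with \<open>cball l \<delta> \<subseteq> hol_resolvent_set T\<close> show False
      by blast
  qed
qed

lemma solves_weighted_rotation_inverse:
  fixes \<beta> :: complex and m :: "complex \<Rightarrow> complex"
  assumes \<beta>: "norm \<beta> = 1" and m: "\<forall>z\<in>ball 0 1. m z \<noteq> 0"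
  shows "solves (weighted_rotation m \<beta>) \<mu> g f \<longleftrightarrow>
    solves (weighted_rotation (\<lambda>w. \<mu> * inverse (m (inverse \<beta> * w))) (inverse \<beta>)) 1
      (\<lambda>w. - g (inverse \<beta> * w) * inverse (m (inverse \<beta> * w))) f"
proof -
  define \<gamma> where "\<gamma> = inverse \<beta>"
  have "\<beta> \<noteq> 0"
    using \<beta> by auto
  then have \<gamma>: "norm \<gamma> = 1" "\<beta> * (\<gamma> * w) = w" "\<gamma> * (\<beta> * w) = w" for w
    using \<beta> by (simp_all add: \<gamma>_def norm_inverse mult.assoc[symmetric])
  have ball: "(\<forall>z\<in>ball 0 1. P z) \<longleftrightarrow> (\<forall>w\<in>ball 0 1. P (\<gamma> * w))" for P
  proof
    assume "\<forall>z\<in>ball 0 1. P z"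
    then show "\<forall>w\<in>ball 0 1. P (\<gamma> * w)"
      using \<gamma>(1) by (simp add: norm_mult)
  next
    assume "\<forall>w\<in>ball 0 1. P (\<gamma> * w)"
    then have "P (\<gamma> * (\<beta> * z))" if "z \<in> ball 0 1" for z
      using that \<beta> by (simp add: norm_mult)
    then show "\<forall>z\<in>ball 0 1. P z"
      by (simp add: \<gamma>(3))
  qed
  have pointwise: "\<mu> * f (\<gamma> * w) - m (\<gamma> * w) * f w = g (\<gamma> * w) \<longleftrightarrow>
      1 * f w - \<mu> * inverse (m (\<gamma> * w)) * f (\<gamma> * w) = - g (\<gamma> * w) * inverse (m (\<gamma> * w))"
    if "w \<in> ball 0 1" for w
  proof -
    have M: "m (\<gamma> * w) \<noteq> 0"
      using m that \<gamma>(1) by (simp add: norm_mult)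
    have "1 * f w - \<mu> * inverse (m (\<gamma> * w)) * f (\<gamma> * w)
        = (m (\<gamma> * w) * f w - \<mu> * f (\<gamma> * w)) * inverse (m (\<gamma> * w))"
      using M by (simp add: left_diff_distrib field_simps)
    also have "\<dots> = - g (\<gamma> * w) * inverse (m (\<gamma> * w)) \<longleftrightarrow> m (\<gamma> * w) * f w - \<mu> * f (\<gamma> * w) = - g (\<gamma> * w)"
      by (simp only: mult_cancel_right) (simp add: M)
    finally show ?thesis
      by (metis minus_diff_eq minus_minus)
  qed
  have "solves (weighted_rotation m \<beta>) \<mu> g f
      \<longleftrightarrow> (\<forall>w\<in>ball 0 1. \<mu> * f (\<gamma> * w) - m (\<gamma> * w) * f w = g (\<gamma> * w))"
    unfolding solves_weighted_rotation ball[of "\<lambda>z. \<mu> * f z - m z * f (\<beta> * z) = g z"]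
    by (simp add: \<gamma>(2))
  also have "\<dots> \<longleftrightarrow> solves (weighted_rotation (\<lambda>w. \<mu> * inverse (m (\<gamma> * w))) \<gamma>) 1
      (\<lambda>w. - g (\<gamma> * w) * inverse (m (\<gamma> * w))) f"
    unfolding solves_weighted_rotation by (rule ball_cong[OF refl pointwise])
  finally show ?thesis
    by (simp add: \<gamma>_def)
qed

lemma hol_resolvent_setI_conjugate:
  fixes T :: "(complex \<Rightarrow> complex) \<Rightarrow> complex \<Rightarrow> complex" and G :: "(complex \<Rightarrow> complex) \<Rightarrow> complex \<Rightarrow> complex"
  assumes \<gamma>: "norm \<gamma> = 1" and \<theta>: "0 \<le> \<theta>" "\<theta> < \<rho>" "\<rho> \<le> norm L"
    and a: "a holomorphic_on ball 0 1" and growth: "cocycle_growth_le a \<gamma> \<theta>"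
    and G: "\<And>g. g holomorphic_on ball 0 1 \<Longrightarrow> G g holomorphic_on ball 0 1"
    and conj: "\<And>g f. solves T \<mu> g f \<longleftrightarrow> solves (weighted_rotation a \<gamma>) L (G g) f"
  shows "\<mu> \<in> hol_resolvent_set T"
  unfolding hol_resolvent_set_def
proof (intro CollectI conjI ballI impI)
  fix g
  assume "g \<in> HolD"
  then have "G g holomorphic_on ball 0 1"
    using G by (simp add: HolD_def)
  then show "\<exists>f\<in>HolD. solves T \<mu> g f"
    using holomorphic_neumann_series[OF \<gamma> \<theta> a _ growth] solves_neumann_series[OF \<gamma> \<theta> _ growth] conj
    by (auto simp: HolD_def)
next
  fix f1 f2 :: "complex \<Rightarrow> complex" and z :: complex
  assume f: "f1 \<in> HolD" "f2 \<in> HolD" and z: "z \<in> ball 0 1"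
    and eq: "\<forall>z\<in>ball 0 1. \<mu> * f1 z - T f1 z = \<mu> * f2 z - T f2 z"
  define g where "g z = \<mu> * f1 z - T f1 z" for z
  have "solves T \<mu> g f1" "solves T \<mu> g f2"
    using eq by (auto simp: solves_def g_def)
  then have "solves (weighted_rotation a \<gamma>) L (G g) f1" "solves (weighted_rotation a \<gamma>) L (G g) f2"
    using conj by auto
  then have "solves (weighted_rotation a \<gamma>) L (\<lambda>_. 0) (\<lambda>z. f1 z - f2 z)"
    by (simp add: solves_weighted_rotation algebra_simps)
  moreover obtain r d where r: "0 < r" "r < 1" "0 < d" "cball z d \<subseteq> cball 0 r"
    using unit_disc_cball_neighbourhood[OF z] .
  moreover obtain C where "\<forall>k w. norm w \<le> r \<longrightarrow> norm (cocycle a \<gamma> k w) \<le> C * \<theta> ^ k"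
    using growth r(1,2) unfolding cocycle_growth_le_def by blast
  moreover have "(\<lambda>z. f1 z - f2 z) holomorphic_on ball 0 1"
    using f by (auto simp: HolD_def intro!: holomorphic_intros)
  moreover have "norm z \<le> r"
    using r(3,4) by (auto simp: subset_iff)
  ultimately have "norm (f1 z - f2 z) \<le> C * 0 / (\<rho> - \<theta>)"
    by (intro norm_weighted_rotation_solution_le[OF \<gamma> \<theta>]) auto
  then show "f1 z = f2 z"
    by simp
qed

text \<open>The conjugations \<open>L\<close>, \<open>G\<close> may depend on \<open>\<mu>\<close>, but the cocycle bound may not: this
  uniformity is what makes the solutions bounded uniformly in \<open>\<mu>\<close>.\<close>
lemma waelbroeck_resolvent_setI_conjugate:
  fixes T :: "(complex \<Rightarrow> complex) \<Rightarrow> complex \<Rightarrow> complex" and a :: "complex \<Rightarrow> complex \<Rightarrow> complex"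
    and L :: "complex \<Rightarrow> complex" and G :: "(complex \<Rightarrow> complex) \<Rightarrow> complex \<Rightarrow> complex"
  assumes "\<delta> > 0" and \<gamma>: "norm \<gamma> = 1" and \<theta>: "0 \<le> \<theta>" "\<theta> < \<rho>"
    and L: "\<And>\<mu>. \<mu> \<in> cball l \<delta> \<Longrightarrow> \<rho> \<le> norm (L \<mu>)"
    and a: "\<And>\<mu>. \<mu> \<in> cball l \<delta> \<Longrightarrow> a \<mu> holomorphic_on ball 0 1"
    and growth: "\<And>r. 0 < r \<Longrightarrow> r < 1 \<Longrightarrow>
      \<exists>C. \<forall>\<mu>\<in>cball l \<delta>. \<forall>k z. norm z \<le> r \<longrightarrow> norm (cocycle (a \<mu>) \<gamma> k z) \<le> C * \<theta> ^ k"
    and G: "\<And>g. g holomorphic_on ball 0 1 \<Longrightarrow> G g holomorphic_on ball 0 1"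
    and conj: "\<And>\<mu> g f. \<mu> \<in> cball l \<delta> \<Longrightarrow>
      solves T \<mu> g f \<longleftrightarrow> solves (weighted_rotation (a \<mu>) \<gamma>) (L \<mu>) (G g) f"
  shows "l \<in> waelbroeck_resolvent_set T"
proof -
  have resolvent: "\<mu> \<in> hol_resolvent_set T" if \<mu>: "\<mu> \<in> cball l \<delta>" for \<mu>
  proof (rule hol_resolvent_setI_conjugate[OF \<gamma> \<theta> L[OF \<mu>] a[OF \<mu>] _ G conj[OF \<mu>]])
    show "cocycle_growth_le (a \<mu>) \<gamma> \<theta>"
      using growth \<mu> unfolding cocycle_growth_le_def by blast
  qed
  have bounded: "\<exists>C. \<forall>\<mu>\<in>cball l \<delta>. \<forall>f\<in>HolD. solves T \<mu> g f \<longrightarrow> (\<forall>z. norm z \<le> r \<longrightarrow> norm (f z) \<le> C)"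
    if g: "g \<in> HolD" and r: "0 < r" "r < 1" for g r
  proof -
    obtain C where C: "\<forall>\<mu>\<in>cball l \<delta>. \<forall>k z. norm z \<le> r \<longrightarrow> norm (cocycle (a \<mu>) \<gamma> k z) \<le> C * \<theta> ^ k"
      using growth r by blast
    obtain B where B: "\<forall>w. norm w \<le> r \<longrightarrow> norm (G g w) \<le> B"
      using holomorphic_bounded_on_cball[OF G r(2)] g by (auto simp: HolD_def)
    have "norm (f z) \<le> C * B / (\<rho> - \<theta>)"
      if \<mu>: "\<mu> \<in> cball l \<delta>" and f: "f \<in> HolD" "solves T \<mu> g f" and z: "norm z \<le> r" for \<mu> f z
      using norm_weighted_rotation_solution_le[OF \<gamma> \<theta> L[OF \<mu>] _ _ r(2) _ B z] f C \<mu> conj[OF \<mu>]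
      by (auto simp: HolD_def)
    then show ?thesis
      by blast
  qed
  show ?thesis
    unfolding waelbroeck_resolvent_set_def
    using resolvent bounded \<open>\<delta> > 0\<close> by (intro CollectI conjI exI[of _ \<delta>]) auto
qed

lemma waelbroeck_resolvent_set_outside:
  fixes \<beta> l :: complex and m :: "complex \<Rightarrow> complex"
  assumes \<beta>: "norm \<beta> = 1" "\<forall>n::nat. n \<ge> 1 \<longrightarrow> \<beta> ^ n \<noteq> 1"
    and m: "m holomorphic_on ball 0 1" "\<forall>z\<in>ball 0 1. m z \<noteq> 0"
    and l: "norm (m 0) < norm l"
  shows "l \<in> waelbroeck_resolvent_set (weighted_rotation m \<beta>)"
proof -
  define \<theta> where "\<theta> = (norm (m 0) + norm l) / 2"
  define \<rho> where "\<rho> = (\<theta> + norm l) / 2"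
  have m0: "0 < norm (m 0)"
    using m(2) by simp
  then have \<theta>: "norm (m 0) < \<theta>" "\<theta> < \<rho>" "\<rho> < norm l"
    using l by (simp_all add: \<theta>_def \<rho>_def field_simps)
  have \<mu>: "\<rho> \<le> norm \<mu>" if "\<mu> \<in> cball l (norm l - \<rho>)" for \<mu>
    using that norm_triangle_ineq2[of l \<mu>] by (simp add: dist_norm)
  have growth: "\<exists>C. \<forall>\<mu>\<in>cball l (norm l - \<rho>). \<forall>k z. norm z \<le> r \<longrightarrow> norm (cocycle m \<beta> k z) \<le> C * \<theta> ^ k"
    if r: "0 < r" "r < 1" for r
  proof -
    have q: "1 < \<theta> / norm (m 0)"
      using \<theta>(1) m0 by simp
    obtain C where "C \<ge> 0"
      "\<forall>k z. norm z \<le> r \<longrightarrow> norm (cocycle m \<beta> k z) \<le> C * (\<theta> / norm (m 0) * norm (m 0)) ^ k"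
      by (rule norm_cocycle_le[OF \<beta> m q less_imp_le[OF r(1)] r(2)])
    then show ?thesis
      using m0 by auto
  qed
  show ?thesis
    by (rule waelbroeck_resolvent_setI_conjugate[where \<delta> = "norm l - \<rho>" and \<gamma> = \<beta> and \<theta> = \<theta> and \<rho> = \<rho>
          and a = "\<lambda>_. m" and L = "\<lambda>\<mu>. \<mu>" and G = "\<lambda>g. g"])
      (use \<beta>(1) \<theta> m(1) \<mu> growth less_imp_le[OF order.strict_trans[OF m0 \<theta>(1)]] in auto)
qed

lemma norm_cocycle_inverse_le:
  fixes \<gamma> :: complex and m :: "complex \<Rightarrow> complex"
  assumes \<gamma>: "norm \<gamma> = 1" "\<forall>n::nat. n \<ge> 1 \<longrightarrow> \<gamma> ^ n \<noteq> 1"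
    and m: "m holomorphic_on ball 0 1" "\<forall>z\<in>ball 0 1. m z \<noteq> 0"
    and q: "q > 1" and r: "0 \<le> r" "r < 1"
  obtains C where "C \<ge> 0"
    "\<forall>k z. norm z \<le> r \<longrightarrow> norm (cocycle (\<lambda>w. inverse (m (\<gamma> * w))) \<gamma> k z) \<le> C * (q / norm (m 0)) ^ k"
proof -
  have "(\<lambda>w. inverse (m (\<gamma> * w))) holomorphic_on ball 0 1"
    using holomorphic_on_rotate[OF m(1) \<gamma>(1)] m(2) \<gamma>(1) by (intro holomorphic_intros) (auto simp: norm_mult)
  moreover have "\<forall>z\<in>ball 0 1. inverse (m (\<gamma> * z)) \<noteq> 0"
    using m(2) \<gamma>(1) by (simp add: norm_mult)
  ultimately obtain C where C: "C \<ge> 0" and bound: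
    "\<forall>k z. norm z \<le> r \<longrightarrow> norm (cocycle (\<lambda>w. inverse (m (\<gamma> * w))) \<gamma> k z)
       \<le> C * (q * norm (inverse (m (\<gamma> * 0)))) ^ k"
    by (rule norm_cocycle_le[OF \<gamma> _ _ q r])
  show ?thesis
  proof (rule that[OF C])
    show "\<forall>k z. norm z \<le> r \<longrightarrow> norm (cocycle (\<lambda>w. inverse (m (\<gamma> * w))) \<gamma> k z) \<le> C * (q / norm (m 0)) ^ k"
      using bound by (simp add: norm_inverse divide_inverse)
  qed
qed

text \<open>After the substitution of \<open>solves_weighted_rotation_inverse\<close> the cocycle is \<open>\<mu>\<^sup>k\<close> times one
  growing like \<open>|m(0)|\<^sup>-\<^sup>k\<close>, so small \<open>|\<mu>|\<close> now means contraction.\<close>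
lemma waelbroeck_resolvent_set_inside:
  fixes \<beta> l :: complex and m :: "complex \<Rightarrow> complex"
  assumes \<beta>: "norm \<beta> = 1" "\<forall>n::nat. n \<ge> 1 \<longrightarrow> \<beta> ^ n \<noteq> 1"
    and m: "m holomorphic_on ball 0 1" "\<forall>z\<in>ball 0 1. m z \<noteq> 0"
    and l: "norm l < norm (m 0)"
  shows "l \<in> waelbroeck_resolvent_set (weighted_rotation m \<beta>)"
proof -
  define \<gamma> where "\<gamma> = inverse \<beta>"
  define \<delta> where "\<delta> = (norm (m 0) - norm l) / 3"
  define \<theta> where "\<theta> = (norm (m 0) - 2 * \<delta>) / (norm (m 0) - \<delta>)"
  have \<delta>: "0 < \<delta>" "0 < norm (m 0) - 2 * \<delta>" "norm l + \<delta> = norm (m 0) - 2 * \<delta>"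
  proof -
    have "0 < norm (m 0)" "0 \<le> 2 * norm l"
      using l le_less_trans[OF norm_ge_zero l] by simp_all
    then show "0 < \<delta>" "0 < norm (m 0) - 2 * \<delta>" "norm l + \<delta> = norm (m 0) - 2 * \<delta>"
      using l by (simp_all add: \<delta>_def field_simps add_pos_nonneg)
  qed
  have \<theta>: "0 \<le> \<theta>" "\<theta> < 1"
    using \<delta> by (simp_all add: \<theta>_def)
  have \<gamma>: "norm \<gamma> = 1" "\<forall>n::nat. n \<ge> 1 \<longrightarrow> \<gamma> ^ n \<noteq> 1"
    using \<beta> by (auto simp: \<gamma>_def norm_inverse power_inverse)
  have \<mu>: "norm \<mu> / (norm (m 0) - \<delta>) \<le> \<theta>" if "\<mu> \<in> cball l \<delta>" for \<mu>
  proof -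
    have "norm \<mu> \<le> norm (m 0) - 2 * \<delta>"
      using that norm_triangle_ineq2[of \<mu> l] \<delta>(3) by (simp add: dist_norm norm_minus_commute)
    then show ?thesis
      unfolding \<theta>_def using \<delta> by (intro divide_right_mono) auto
  qed
  have growth: "\<exists>C. \<forall>\<mu>\<in>cball l \<delta>. \<forall>k z. norm z \<le> r \<longrightarrow>
      norm (cocycle (\<lambda>w. \<mu> * inverse (m (\<gamma> * w))) \<gamma> k z) \<le> C * \<theta> ^ k"
    if r: "0 < r" "r < 1" for r
  proof -
    have q: "1 < norm (m 0) / (norm (m 0) - \<delta>)"
      using \<delta> by simp
    have q_eq: "norm (m 0) / (norm (m 0) - \<delta>) / norm (m 0) = 1 / (norm (m 0) - \<delta>)"
      using \<delta> m(2) by (simp add: field_simps)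
    obtain C where C: "C \<ge> 0" "\<forall>k z. norm z \<le> r \<longrightarrow>
        norm (cocycle (\<lambda>w. inverse (m (\<gamma> * w))) \<gamma> k z) \<le> C * (norm (m 0) / (norm (m 0) - \<delta>) / norm (m 0)) ^ k"
      by (rule norm_cocycle_inverse_le[OF \<gamma> m q less_imp_le[OF r(1)] r(2)])
    have "norm (cocycle (\<lambda>w. \<mu> * inverse (m (\<gamma> * w))) \<gamma> k z) \<le> C * \<theta> ^ k"
      if "\<mu> \<in> cball l \<delta>" "norm z \<le> r" for \<mu> k z
    proof -
      have "norm (cocycle (\<lambda>w. \<mu> * inverse (m (\<gamma> * w))) \<gamma> k z)
          = norm \<mu> ^ k * norm (cocycle (\<lambda>w. inverse (m (\<gamma> * w))) \<gamma> k z)"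
        by (simp add: cocycle_scale norm_mult norm_power)
      also have "\<dots> \<le> norm \<mu> ^ k * (C * (norm (m 0) / (norm (m 0) - \<delta>) / norm (m 0)) ^ k)"
        using C(2) \<open>norm z \<le> r\<close> by (intro mult_left_mono) auto
      also have "\<dots> = C * (norm \<mu> / (norm (m 0) - \<delta>)) ^ k"
        unfolding q_eq by (simp add: power_divide mult_ac)
      also have "\<dots> \<le> C * \<theta> ^ k"
        using \<mu>[OF that(1)] C(1) \<delta> by (intro mult_left_mono power_mono) auto
      finally show ?thesis .
    qed
    then show ?thesis
      by blast
  qed
  have G: "(\<lambda>w. - g (\<gamma> * w) * inverse (m (\<gamma> * w))) holomorphic_on ball 0 1"
    if "g holomorphic_on ball 0 1" for g
    using holomorphic_on_rotate[OF that \<gamma>(1)] holomorphic_on_rotate[OF m(1) \<gamma>(1)] m(2) \<gamma>(1)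
    by (intro holomorphic_intros) (auto simp: norm_mult)
  have a: "(\<lambda>w. \<mu> * inverse (m (\<gamma> * w))) holomorphic_on ball 0 1" for \<mu>
    using holomorphic_on_rotate[OF m(1) \<gamma>(1)] m(2) \<gamma>(1)
    by (intro holomorphic_intros) (auto simp: norm_mult)
  show ?thesis
    by (rule waelbroeck_resolvent_setI_conjugate[where \<gamma> = \<gamma> and \<theta> = \<theta> and \<rho> = 1
          and a = "\<lambda>\<mu> w. \<mu> * inverse (m (\<gamma> * w))" and L = "\<lambda>_. 1"
          and G = "\<lambda>g w. - g (\<gamma> * w) * inverse (m (\<gamma> * w))"])
      (use \<delta>(1) \<gamma>(1) \<theta> growth G a solves_weighted_rotation_inverse[OF \<beta>(1) m(2)] in
        \<open>auto simp: \<gamma>_def\<close>)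
qed

theorem theorem7p3:
  fixes \<beta> :: complex and m :: "complex \<Rightarrow> complex"
    and T :: "(complex \<Rightarrow> complex) \<Rightarrow> (complex \<Rightarrow> complex)"
  assumes "norm \<beta> = 1"
    and "\<forall>n::nat. n \<ge> 1 \<longrightarrow> \<beta> ^ n \<noteq> 1"
    and "m holomorphic_on ball 0 1"
    and "\<forall>z\<in>ball 0 1. m z \<noteq> 0"
    and "T = (\<lambda>f z. m z * f (\<beta> * z))"
  shows "{\<beta> ^ n * m 0 | n::nat. True} \<subseteq> hol_spectrum T
       \<and> hol_spectrum T \<subseteq> {l. norm l = norm (m 0)}
       \<and> waelbroeck_spectrum T = {l. norm l = norm (m 0)}"
proof -
  have T: "T = weighted_rotation m \<beta>"
    using assms(5) by (simp add: fun_eq_iff weighted_rotation_def)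
  have orbit: "range (\<lambda>n. \<beta> ^ n * m 0) \<subseteq> hol_spectrum T"
    using power_mult_not_in_hol_resolvent_set[OF assms(1-3)] assms(4)
    by (auto simp: T hol_spectrum_def)
  have off_circle: "l \<in> waelbroeck_resolvent_set T" if "norm l \<noteq> norm (m 0)" for l
    using that waelbroeck_resolvent_set_inside[OF assms(1-4)] waelbroeck_resolvent_set_outside[OF assms(1-4)]
    by (auto simp: T neq_iff)
  have "waelbroeck_resolvent_set T \<subseteq> hol_resolvent_set T"
    by (auto simp: waelbroeck_resolvent_set_def)
  then have spectrum: "hol_spectrum T \<subseteq> {l. norm l = norm (m 0)}"
    using off_circle by (auto simp: hol_spectrum_def)
  have "sphere 0 (norm (m 0)) \<subseteq> closure (hol_spectrum T)"
    using sphere_subset_closure_orbit[OF assms(1,2)] closure_mono[OF orbit] by blast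
  then have "{l. norm l = norm (m 0)} \<subseteq> waelbroeck_spectrum T"
    using closure_hol_spectrum_subset_waelbroeck_spectrum by fastforce
  moreover have "waelbroeck_spectrum T \<subseteq> {l. norm l = norm (m 0)}"
    using off_circle by (auto simp: waelbroeck_spectrum_def)
  ultimately show ?thesis
    using orbit spectrum by blast
qed

end
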